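(* For every constant $c>0$ there is a constant $A_c>0$ such that for every $n\ge 2$, every straight-line drawing of the complete graph $K_n$ in the hyperbolic plane with vertex-vertex resolution at least $c$ has angular resolution at most $A_c/n^2$.
   Context: The hyperbolic plane is the complete simply connected Riemannian surface of constant curvature $-1$. A straight-line drawing of a graph in the hyperbolic plane places the vertices at distinct points and draws each edge as the hyperbolic geodesic segment between its endpoints (crossings are allowed). The vertex-vertex resolution is the minimum hyperbolic distance between two distinct vertices; the angular resolution is the minimum angle formed at a vertex between two edges incident to that vertex. *)

theory Defs
  imports "HOL-Analysis.Analysis"
begin

text \<open>Hyperboloid model of the hyperbolic plane in R^3 with the Minkowski form
  <x,y> = - x1 y1 + x2 y2 + x3 y3 (coordinate 1 is the time-like one).\<close>

definition mink :: "real^3 \<Rightarrow> real^3 \<Rightarrow> real" where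
  "mink x y = - (x$1 * y$1) + x$2 * y$2 + x$3 * y$3"

definition hyp_plane :: "(real^3) set" where
  "hyp_plane = {x. mink x x = -1 \<and> x$1 > 0}"

definition hdist :: "real^3 \<Rightarrow> real^3 \<Rightarrow> real" where
  "hdist x y = arcosh (- mink x y)"

text \<open>Initial tangent vector at p of the geodesic from p towards q
  (Minkowski-orthogonal projection of q onto the tangent plane at p).\<close>
definition htangent :: "real^3 \<Rightarrow> real^3 \<Rightarrow> real^3" where
  "htangent p q = q + mink p q *\<^sub>R p"

definition hangle :: "real^3 \<Rightarrow> real^3 \<Rightarrow> real^3 \<Rightarrow> real" where
  "hangle p q r =
     (let u = htangent p q; v = htangent p r
      in arccos (mink u v / sqrt (mink u u * mink v v)))"

definition hdrawing :: "nat \<Rightarrow> (nat \<Rightarrow> real^3) \<Rightarrow> bool" where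
  "hdrawing n P \<longleftrightarrow> (\<forall>i<n. P i \<in> hyp_plane) \<and> inj_on P {..<n}"

text \<open>If no vertex has two incident edges (n = 2)
  we use the convention that the angular resolution is 2 pi.\<close>
definition ang_res_Kn :: "nat \<Rightarrow> (nat \<Rightarrow> real^3) \<Rightarrow> real" where
  "ang_res_Kn n P =
     (let S = {hangle (P v) (P u) (P w) | v u w.
                 v < n \<and> u < n \<and> w < n \<and> u \<noteq> v \<and> w \<noteq> v \<and> u \<noteq> w}
      in if S = {} then 2 * pi else Min S)"

definition vv_res_Kn :: "nat \<Rightarrow> (nat \<Rightarrow> real^3) \<Rightarrow> real" where
  "vv_res_Kn n P = Min {hdist (P i) (P j) | i j. i < n \<and> j < n \<and> i \<noteq> j}"

end

theory Submission
  imports Defs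
begin

text \<open>
  Move the drawing by an isometry into the upper half-plane with its lowest vertex v at i.
  Then every vertex z has Im z >= 1, and vertex resolution c means
  |z - w|^2 >= 2 (cosh c - 1) Im z Im w.  The vertices with |z| < rho number O(rho), since on
  each level q^k <= Im z < q^(k+1) their real parts are separated by a fixed multiple of q^k.
  The vertices with |z| >= rho are seen from v in directions within O(1/rho) of a single one,
  so if all angles at v are at least alpha there are O(1/(alpha rho)) of them.  For rho ~ n and
  alpha = A/n^2 both counts are at most n/4 + 1 once A is large, which is absurd for large n;
  for small n the angular resolution is at most 2 pi anyway.
\<close>

section \<open>The upper half-plane chart\<close>

lemma hyp_plane_time_gt_space:
  assumes "u \<in> hyp_plane"
  shows "u$2 < u$1"
proof -
  have "(u$1 - u$2) * (u$1 + u$2) = 1 + (u$3)\<^sup>2" "u$1 > 0"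
    using assms by (auto simp: hyp_plane_def mink_def algebra_simps power2_eq_square)
  then show ?thesis
    by (smt (verit) mult_nonpos_nonneg zero_le_power2)
qed

text \<open>The standard isometry from the hyperboloid onto the Poincare upper half-plane.\<close>

definition uhp :: "real^3 \<Rightarrow> complex" where
  "uhp u = Complex (u$3 / (u$1 - u$2)) (1 / (u$1 - u$2))"

definition uhp_cosh_dist :: "complex \<Rightarrow> complex \<Rightarrow> real" where
  "uhp_cosh_dist z w = 1 + (cmod (z - w))\<^sup>2 / (2 * Im z * Im w)"

lemma Im_uhp_pos: "u \<in> hyp_plane \<Longrightarrow> 0 < Im (uhp u)"
  using hyp_plane_time_gt_space[of u] by (simp add: uhp_def)

lemma neg_mink_eq_uhp_cosh_dist:
  assumes "u \<in> hyp_plane" "w \<in> hyp_plane"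
  shows "- mink u w = uhp_cosh_dist (uhp u) (uhp w)"
proof -
  define a b where "a = u$1 - u$2" and "b = w$1 - w$2"
  have pos: "a > 0" "b > 0"
    using hyp_plane_time_gt_space assms by (auto simp: a_def b_def)
  have "2 * a * b * (- mink u w) = a\<^sup>2 * (1 + (w$3)\<^sup>2) + b\<^sup>2 * (1 + (u$3)\<^sup>2) - 2 * a * b * u$3 * w$3"
    using assms unfolding a_def b_def mink_def hyp_plane_def by simp algebra
  moreover have "2 * a * b * uhp_cosh_dist (uhp u) (uhp w)
      = a\<^sup>2 * (1 + (w$3)\<^sup>2) + b\<^sup>2 * (1 + (u$3)\<^sup>2) - 2 * a * b * u$3 * w$3"
    using pos unfolding uhp_cosh_dist_def uhp_def a_def[symmetric] b_def[symmetric]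
    by (simp add: cmod_power2 field_simps) algebra
  ultimately show ?thesis
    using pos by (metis mult_cancel_left mult_pos_pos zero_less_numeral less_irrefl)
qed

lemma uhp_cosh_dist_affine:
  assumes "b > 0"
  shows "uhp_cosh_dist ((z - of_real a) / of_real b) ((w - of_real a) / of_real b) = uhp_cosh_dist z w"
proof -
  have "(z - of_real a) / of_real b - (w - of_real a) / of_real b = (z - w) / of_real b"
    by (simp add: diff_divide_distrib)
  then show ?thesis
    using assms by (simp add: uhp_cosh_dist_def norm_divide power_divide field_simps power2_eq_square)
qed

lemma uhp_cosh_dist_ge_1: "0 < Im z \<Longrightarrow> 0 < Im w \<Longrightarrow> 1 \<le> uhp_cosh_dist z w"
  by (simp add: uhp_cosh_dist_def)

lemma cosh_le_neg_mink:
  assumes "u \<in> hyp_plane" "w \<in> hyp_plane" "0 \<le> c" "c \<le> hdist u w"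
  shows "cosh c \<le> - mink u w"
proof -
  have "1 \<le> - mink u w"
    using assms(1,2) by (simp add: neg_mink_eq_uhp_cosh_dist uhp_cosh_dist_ge_1 Im_uhp_pos)
  then show ?thesis
    using assms(3,4) cosh_real_nonneg_le_iff[of c "hdist u w"] by (simp add: hdist_def)
qed

lemma separation_of_uhp_cosh_dist_ge:
  assumes "0 < Im z" "0 < Im w" "1 + \<kappa> \<le> uhp_cosh_dist z w"
  shows "2 * \<kappa> * Im z * Im w \<le> (cmod (z - w))\<^sup>2"
  using assms by (simp add: uhp_cosh_dist_def field_simps)

definition chart_at :: "real^3 \<Rightarrow> real^3 \<Rightarrow> complex" where
  "chart_at v u = (uhp u - of_real (Re (uhp v))) / of_real (Im (uhp v))"

lemma chart_at_self: "v \<in> hyp_plane \<Longrightarrow> chart_at v v = \<i>"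
  using Im_uhp_pos[of v] by (simp add: chart_at_def complex_eq_iff)

lemma Im_chart_at: "Im (chart_at v u) = Im (uhp u) / Im (uhp v)"
  by (simp add: chart_at_def Im_divide_of_real)

lemma neg_mink_eq_cosh_chart_at:
  assumes "v \<in> hyp_plane" "u \<in> hyp_plane" "w \<in> hyp_plane"
  shows "- mink u w = uhp_cosh_dist (chart_at v u) (chart_at v w)"
  using neg_mink_eq_uhp_cosh_dist[OF assms(2,3)] uhp_cosh_dist_affine[OF Im_uhp_pos[OF assms(1)]]
  by (simp add: chart_at_def)

text \<open>For z = chart_at v u this is htangent v u in an orthonormal frame of the tangent plane
  at v (see mink_htangent_eq_inner).\<close>

definition tangent_at_i :: "complex \<Rightarrow> complex" where
  "tangent_at_i z = Complex (((cmod z)\<^sup>2 - 1) / (2 * Im z)) (Re z / Im z)"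

lemma inner_tangent_at_i:
  assumes "Im z > 0" "Im w > 0"
  shows "inner (tangent_at_i z) (tangent_at_i w)
           = uhp_cosh_dist \<i> z * uhp_cosh_dist \<i> w - uhp_cosh_dist z w"
  using assms
  by (simp add: tangent_at_i_def uhp_cosh_dist_def inner_complex_def cmod_power2 field_simps)
     (simp add: algebra_simps power2_eq_square)

lemma mink_htangent:
  assumes "mink v v = -1"
  shows "mink (htangent v a) (htangent v b) = mink a b + mink v a * mink v b"
  using assms unfolding htangent_def mink_def by simp algebra

lemma mink_htangent_eq_inner:
  assumes v: "v \<in> hyp_plane" and "a \<in> hyp_plane" "b \<in> hyp_plane"
  shows "mink (htangent v a) (htangent v b)
           = inner (tangent_at_i (chart_at v a)) (tangent_at_i (chart_at v b))"
proof -
  have "mink v v = -1"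
    using v by (simp add: hyp_plane_def)
  moreover have "mink x y = - uhp_cosh_dist (chart_at v x) (chart_at v y)"
    if "x \<in> hyp_plane" "y \<in> hyp_plane" for x y
    using neg_mink_eq_cosh_chart_at[OF v that] by simp
  moreover have "0 < Im (chart_at v x)" if "x \<in> hyp_plane" for x
    using Im_uhp_pos v that by (simp add: Im_chart_at)
  ultimately show ?thesis
    using assms chart_at_self[OF v] by (simp add: mink_htangent inner_tangent_at_i)
qed

definition vec_angle :: "'a::real_inner \<Rightarrow> 'a \<Rightarrow> real" where
  "vec_angle x y = arccos (inner x y / (norm x * norm y))"

lemma hangle_eq_vec_angle:
  assumes "v \<in> hyp_plane" "u \<in> hyp_plane" "w \<in> hyp_plane"
  shows "hangle v u w = vec_angle (tangent_at_i (chart_at v u)) (tangent_at_i (chart_at v w))"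
  using assms
  by (simp add: hangle_def vec_angle_def mink_htangent_eq_inner norm_eq_sqrt_inner real_sqrt_mult)

section \<open>Angles between plane vectors\<close>

lemma vec_angle_le_pi: "vec_angle x y \<le> pi"
proof -
  have "\<bar>inner x y / (norm x * norm y)\<bar> \<le> 1"
    using Cauchy_Schwarz_ineq2[of x y]
    by (cases "norm x * norm y = 0") (simp_all add: abs_divide divide_le_eq_1)
  then show ?thesis
    unfolding vec_angle_def by (intro arccos_ubound) linarith+
qed

lemma sin_ge_third:
  fixes x :: real
  assumes "0 \<le> x" "x \<le> 2"
  shows "x / 3 \<le> sin x"
proof -
  have "\<bar>sin x - (\<Sum>m<3. sin_coeff m * x ^ m)\<bar> \<le> inverse (fact 3) * \<bar>x\<bar> ^ 3"
    by (rule Maclaurin_sin_bound)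
  moreover have "(\<Sum>m<3. sin_coeff m * x ^ m) = x"
    by (simp add: sin_coeff_def eval_nat_numeral)
  ultimately have "\<bar>sin x - x\<bar> \<le> x ^ 3 / 6"
    using assms by (simp add: eval_nat_numeral)
  moreover have "x * x\<^sup>2 \<le> x * 2\<^sup>2"
    using assms by (intro mult_left_mono power_mono) auto
  then have "x ^ 3 \<le> 4 * x"
    by (simp add: power3_eq_cube power2_eq_square mult.assoc)
  ultimately show ?thesis
    by arith
qed

lemma arccos_le_of_one_minus_le:
  assumes "-1 \<le> t" "t \<le> 1" "1 - t \<le> d\<^sup>2" "0 \<le> d"
  shows "arccos t \<le> 5 * d"
proof -
  define \<theta> where "\<theta> = arccos t"
  have \<theta>: "0 \<le> \<theta>" "\<theta> \<le> pi" "cos \<theta> = t"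
    using assms by (auto simp: \<theta>_def arccos_lbound arccos_ubound cos_arccos)
  have "(\<theta>/6)\<^sup>2 \<le> (sin (\<theta>/2))\<^sup>2"
    using sin_ge_third[of "\<theta>/2"] \<theta> pi_less_4 by (intro power_mono) auto
  moreover have "1 - t = 2 * (sin (\<theta>/2))\<^sup>2"
    using cos_double_sin[of "\<theta>/2"] \<theta> by simp
  ultimately have "\<theta>\<^sup>2 \<le> 18 * d\<^sup>2"
    using assms(3) by (simp add: power_divide)
  also have "\<dots> \<le> (5 * d)\<^sup>2"
    by (simp add: power_mult_distrib)
  finally have "\<theta> \<le> 5 * d"
    by (rule power2_le_imp_le) (use assms(4) in simp)
  then show ?thesis
    by (simp add: \<theta>_def)
qed

lemma one_minus_inner_sgn:
  fixes x y :: "'a::real_inner"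
  assumes "x \<noteq> 0" "y \<noteq> 0"
  shows "1 - inner (sgn x) (sgn y) = (norm (sgn x - sgn y))\<^sup>2 / 2"
proof -
  have "inner (sgn v) (sgn v) = 1" if "v \<noteq> 0" for v :: 'a
    using that by (simp add: norm_sgn flip: power2_norm_eq_inner)
  then show ?thesis
    using assms by (simp add: power2_norm_eq_inner inner_diff inner_commute)
qed

lemma cmod_sgn_diff_le_Im:
  assumes "z \<noteq> 0" "w \<noteq> 0" "\<bar>Im z\<bar> \<le> Re z" "\<bar>Im w\<bar> \<le> Re w"
  shows "(cmod (sgn z - sgn w))\<^sup>2 \<le> 2 * (Im (sgn z) - Im (sgn w))\<^sup>2"
proof -
  define c1 s1 c2 s2 where "c1 = Re (sgn z)" "s1 = Im (sgn z)" "c2 = Re (sgn w)" "s2 = Im (sgn w)"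
  have unit: "c1\<^sup>2 + s1\<^sup>2 = 1" "c2\<^sup>2 + s2\<^sup>2 = 1"
    using assms(1,2) norm_sgn[of z] norm_sgn[of w]
    by (simp_all add: c1_s1_c2_s2_def power_divide flip: add_divide_distrib cmod_power2)
  have cone: "\<bar>s1\<bar> \<le> c1" "\<bar>s2\<bar> \<le> c2"
    using assms by (simp_all add: c1_s1_c2_s2_def abs_divide divide_right_mono)
  have "0 < Re z" "0 < Re w"
    using assms by (auto simp: complex_eq_iff)
  then have pos: "0 < c1 + c2"
    using assms(1,2) unfolding c1_s1_c2_s2_def by (auto intro!: add_pos_pos divide_pos_pos)
  have "(c1 - c2) * (c1 + c2) = - ((s1 - s2) * (s1 + s2))"
    using unit by (simp add: algebra_simps power2_eq_square)
  then have "\<bar>c1 - c2\<bar> * (c1 + c2) = \<bar>s1 - s2\<bar> * \<bar>s1 + s2\<bar>"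
    using pos by (metis abs_minus_cancel abs_mult abs_of_pos)
  also have "\<dots> \<le> \<bar>s1 - s2\<bar> * (c1 + c2)"
    using cone by (intro mult_left_mono) auto
  finally have "\<bar>c1 - c2\<bar> \<le> \<bar>s1 - s2\<bar>"
    using pos by simp
  then have "(c1 - c2)\<^sup>2 \<le> (s1 - s2)\<^sup>2"
    by (simp add: abs_le_square_iff)
  then show ?thesis
    by (simp add: c1_s1_c2_s2_def cmod_power2)
qed

lemma vec_angle_le_Im_sgn_diff:
  assumes "z \<noteq> 0" "w \<noteq> 0" "\<bar>Im z\<bar> \<le> Re z" "\<bar>Im w\<bar> \<le> Re w"
  shows "vec_angle z w \<le> 5 * \<bar>Im (sgn z) - Im (sgn w)\<bar>"
proof -
  have "vec_angle z w = arccos (inner (sgn z) (sgn w))"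
    by (simp add: vec_angle_def sgn_div_norm field_simps)
  also have "\<dots> \<le> 5 * \<bar>Im (sgn z) - Im (sgn w)\<bar>"
  proof (rule arccos_le_of_one_minus_le)
    have "\<bar>inner (sgn z) (sgn w)\<bar> \<le> 1"
      using Cauchy_Schwarz_ineq2[of "sgn z" "sgn w"] by (simp add: norm_sgn assms)
    then show "-1 \<le> inner (sgn z) (sgn w)" "inner (sgn z) (sgn w) \<le> 1"
      by linarith+
    show "1 - inner (sgn z) (sgn w) \<le> \<bar>Im (sgn z) - Im (sgn w)\<bar>\<^sup>2"
      using one_minus_inner_sgn[OF assms(1,2)] cmod_sgn_diff_le_Im[OF assms] by simp
  qed simp
  finally show ?thesis .
qed

section \<open>Counting separated points in the half-plane\<close>

lemma card_le_of_separated: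
  fixes f :: "'a \<Rightarrow> real"
  assumes "finite S" "a \<le> b" "d > 0"
    and range: "\<And>i. i \<in> S \<Longrightarrow> a \<le> f i \<and> f i \<le> b"
    and sep: "\<And>i j. i \<in> S \<Longrightarrow> j \<in> S \<Longrightarrow> i \<noteq> j \<Longrightarrow> d \<le> \<bar>f i - f j\<bar>"
  shows "real (card S) \<le> (b - a) / d + 1"
proof -
  define g where "g i = nat \<lfloor>(f i - a) / d\<rfloor>" for i
  have "inj_on g S"
  proof (rule inj_onI, rule ccontr)
    fix i j assume ij: "i \<in> S" "j \<in> S" "g i = g j" "i \<noteq> j"
    define x y where "x = (f i - a) / d" and "y = (f j - a) / d"
    have "\<lfloor>x\<rfloor> = \<lfloor>y\<rfloor>"
      using ij range[of i] range[of j] \<open>d > 0\<close> by (simp add: g_def x_def y_def eq_nat_nat_iff)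
    then have "\<bar>x - y\<bar> < 1"
      using floor_correct[of x] floor_correct[of y] by linarith
    then have "\<bar>f i - f j\<bar> < d"
      using \<open>d > 0\<close> by (simp add: x_def y_def diff_divide_distrib[symmetric] abs_divide)
    with sep ij show False
      by force
  qed
  moreover have "g ` S \<subseteq> {0..nat \<lfloor>(b - a) / d\<rfloor>}"
  proof (clarsimp simp: g_def)
    fix i assume "i \<in> S"
    then have "(f i - a) / d \<le> (b - a) / d"
      using range \<open>d > 0\<close> by (simp add: divide_right_mono)
    then show "nat \<lfloor>(f i - a) / d\<rfloor> \<le> nat \<lfloor>(b - a) / d\<rfloor>"
      by (intro nat_mono floor_mono)
  qed
  ultimately have "card S \<le> card {0..nat \<lfloor>(b - a) / d\<rfloor>}"
    by (rule card_inj_on_le) simp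
  also have "\<dots> = nat \<lfloor>(b - a) / d\<rfloor> + 1"
    by simp
  finally have "real (card S) \<le> real (nat \<lfloor>(b - a) / d\<rfloor>) + 1"
    by simp
  also have "real (nat \<lfloor>(b - a) / d\<rfloor>) = of_int \<lfloor>(b - a) / d\<rfloor>"
    using assms(2,3) by simp
  finally show ?thesis
    by linarith
qed

lemma ex_level_index:
  fixes t y \<rho> :: real
  assumes "0 < t" "1 \<le> y" "y < \<rho>"
  obtains k where "k < nat \<lceil>\<rho> / t\<rceil>" "(1 + t) ^ k \<le> y" "y < (1 + t) ^ Suc k"
proof -
  obtain n where "y < (1 + t) ^ n"
    using real_arch_pow[of "1 + t"] assms(1) by auto
  then obtain k where k: "(1 + t) ^ k \<le> y" "y < (1 + t) ^ Suc k"
    using ex_least_nat_less[of "\<lambda>k. y < (1 + t) ^ k" n] assms(2) by (auto simp: not_less)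
  have "1 + real k * t \<le> (1 + t) ^ k"
    using Bernoulli_inequality[of t k] assms(1) by simp
  then have "real k < \<rho> / t"
    using k(1) assms by (simp add: field_simps)
  then have "k < nat \<lceil>\<rho> / t\<rceil>"
    by (simp add: zless_nat_eq_int_zless less_ceiling_iff)
  with k show ?thesis
    using that by blast
qed

lemma card_level_le:
  fixes z :: "'a \<Rightarrow> complex"
  assumes "finite J" "0 < t" "0 < h" "0 \<le> \<rho>"
    and level: "\<And>i. i \<in> J \<Longrightarrow> h \<le> Im (z i) \<and> Im (z i) < (1 + t) * h \<and> \<bar>Re (z i)\<bar> \<le> \<rho>"
    and sep: "\<And>i j. i \<in> J \<Longrightarrow> j \<in> J \<Longrightarrow> i \<noteq> j \<Longrightarrow>
                2 * t\<^sup>2 * Im (z i) * Im (z j) \<le> (cmod (z i - z j))\<^sup>2"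
  shows "real (card J) \<le> 2 * \<rho> / (t * h) + 1"
proof -
  have "real (card J) \<le> (\<rho> - - \<rho>) / (t * h) + 1"
  proof (rule card_le_of_separated[where f = "\<lambda>i. Re (z i)"])
    fix i j assume ij: "i \<in> J" "j \<in> J" "i \<noteq> j"
    show "t * h \<le> \<bar>Re (z i) - Re (z j)\<bar>"
    proof (rule ccontr)
      assume "\<not> ?thesis"
      then have "\<bar>Re (z i - z j)\<bar> < t * h"
        by simp
      moreover have "\<bar>Im (z i - z j)\<bar> < t * h"
        using level[OF ij(1)] level[OF ij(2)] by (simp add: abs_less_iff algebra_simps)
      ultimately have "(cmod (z i - z j))\<^sup>2 < 2 * (t * h)\<^sup>2"
        using power_strict_mono[of "\<bar>Re (z i - z j)\<bar>" "t * h" 2]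
          power_strict_mono[of "\<bar>Im (z i - z j)\<bar>" "t * h" 2]
        by (simp add: cmod_power2)
      also have "\<dots> \<le> 2 * t\<^sup>2 * Im (z i) * Im (z j)"
      proof -
        have "h * h \<le> Im (z i) * Im (z j)"
          using level[OF ij(1)] level[OF ij(2)] \<open>0 < h\<close> by (intro mult_mono) auto
        from mult_left_mono[OF this, of "2 * t\<^sup>2"] show ?thesis
          by (simp add: power_mult_distrib power2_eq_square mult_ac)
      qed
      finally show False
        using sep[OF ij] by simp
    qed
  qed (use assms(1-4) in \<open>auto dest!: level simp: abs_le_iff\<close>)
  then show ?thesis
    by simp
qed

lemma sum_levels_le:
  fixes t \<rho> :: real
  assumes "0 < t" "0 < \<rho>"
  shows "(\<Sum>k<nat \<lceil>\<rho> / t\<rceil>. 2 * \<rho> / (t * (1 + t) ^ k) + 1)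
           \<le> (2 * (1 + t) / t\<^sup>2 + 1 / t) * \<rho> + 1"
proof -
  define q where "q = 1 + t"
  have "(\<Sum>k<nat \<lceil>\<rho> / t\<rceil>. 2 * \<rho> / (t * q ^ k) + 1)
          = 2 * \<rho> / t * (\<Sum>k<nat \<lceil>\<rho> / t\<rceil>. (1 / q) ^ k) + nat \<lceil>\<rho> / t\<rceil>"
    by (simp add: sum.distrib sum_distrib_left power_one_over field_simps)
  also have "\<dots> \<le> 2 * \<rho> / t * (q / t) + (\<rho> / t + 1)"
  proof (intro add_mono mult_left_mono)
    have "(\<Sum>k<nat \<lceil>\<rho> / t\<rceil>. (1 / q) ^ k) \<le> (\<Sum>k. (1 / q) ^ k)"
      using assms by (intro sum_le_suminf summable_geometric) (auto simp: q_def)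
    also have "\<dots> = q / t"
      using assms by (subst suminf_geometric) (auto simp: q_def field_simps)
    finally show "(\<Sum>k<nat \<lceil>\<rho> / t\<rceil>. (1 / q) ^ k) \<le> q / t" .
    show "real (nat \<lceil>\<rho> / t\<rceil>) \<le> \<rho> / t + 1"
      using assms by simp
  qed (use assms in simp)
  also have "\<dots> = (2 * (1 + t) / t\<^sup>2 + 1 / t) * \<rho> + 1"
    using assms by (simp add: q_def field_simps power2_eq_square)
  finally show ?thesis
    by (simp add: q_def)
qed

definition near_const :: "real \<Rightarrow> real" where
  "near_const \<kappa> = 2 * (1 + sqrt \<kappa>) / \<kappa> + 1 / sqrt \<kappa>"

lemma near_const_pos: "0 < \<kappa> \<Longrightarrow> 0 < near_const \<kappa>"
  unfolding near_const_def by (intro add_pos_pos divide_pos_pos mult_pos_pos) auto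

text \<open>With t = sqrt kappa, points on the level (1 + t)^k <= Im z < (1 + t)^(k+1) have real
  parts at distance at least t (1 + t)^k.\<close>

lemma card_near_le:
  fixes z :: "'a \<Rightarrow> complex"
  assumes "finite I" "0 < \<kappa>" "0 < \<rho>"
    and near: "\<And>i. i \<in> I \<Longrightarrow> 1 \<le> Im (z i) \<and> cmod (z i) < \<rho>"
    and sep: "\<And>i j. i \<in> I \<Longrightarrow> j \<in> I \<Longrightarrow> i \<noteq> j \<Longrightarrow>
                2 * \<kappa> * Im (z i) * Im (z j) \<le> (cmod (z i - z j))\<^sup>2"
  shows "real (card I) \<le> near_const \<kappa> * \<rho> + 1"
proof -
  define t where "t = sqrt \<kappa>"
  define K where "K = nat \<lceil>\<rho> / t\<rceil>"
  define L where "L k = {i \<in> I. (1 + t) ^ k \<le> Im (z i) \<and> Im (z i) < (1 + t) ^ Suc k}" for k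
  have t: "0 < t" "t\<^sup>2 = \<kappa>"
    using \<open>0 < \<kappa>\<close> by (simp_all add: t_def)
  have "I \<subseteq> (\<Union>k<K. L k)"
  proof
    fix i assume i: "i \<in> I"
    have "Im (z i) < \<rho>"
      using near[OF i] abs_Im_le_cmod[of "z i"] by linarith
    then obtain k where "k < K" "(1 + t) ^ k \<le> Im (z i)" "Im (z i) < (1 + t) ^ Suc k"
      using ex_level_index[OF t(1)] near[OF i] unfolding K_def by blast
    with i show "i \<in> (\<Union>k<K. L k)"
      by (auto simp: L_def)
  qed
  then have "card I \<le> card (\<Union>k<K. L k)"
    using \<open>finite I\<close> by (intro card_mono) (auto simp: L_def)
  also have "\<dots> \<le> (\<Sum>k<K. card (L k))"
    by (rule card_UN_le) simp
  finally have "real (card I) \<le> (\<Sum>k<K. real (card (L k)))"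
    by (simp flip: of_nat_sum)
  also have "\<dots> \<le> (\<Sum>k<K. 2 * \<rho> / (t * (1 + t) ^ k) + 1)"
  proof (intro sum_mono card_level_le)
    fix k i j
    show "finite (L k)" "0 \<le> \<rho>" "0 < t" "0 < (1 + t) ^ k"
      using \<open>finite I\<close> \<open>0 < \<rho>\<close> t by (simp_all add: L_def)
    show "(1 + t) ^ k \<le> Im (z i) \<and> Im (z i) < (1 + t) * (1 + t) ^ k \<and> \<bar>Re (z i)\<bar> \<le> \<rho>"
      if "i \<in> L k"
      using that near abs_Re_le_cmod[of "z i"] by (fastforce simp: L_def)
    show "2 * t\<^sup>2 * Im (z i) * Im (z j) \<le> (cmod (z i - z j))\<^sup>2"
      if "i \<in> L k" "j \<in> L k" "i \<noteq> j"
      using that sep t by (simp add: L_def)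
  qed
  also have "\<dots> \<le> near_const \<kappa> * \<rho> + 1"
    using sum_levels_le[OF t(1) \<open>0 < \<rho>\<close>] t by (simp add: K_def near_const_def t_def)
  finally show ?thesis .
qed

lemma tangent_at_i_far:
  assumes "1 \<le> Im z" "6 \<le> cmod z"
  shows "tangent_at_i z \<noteq> 0" "\<bar>Im (tangent_at_i z)\<bar> \<le> Re (tangent_at_i z)"
    and "\<bar>Im (sgn (tangent_at_i z))\<bar> \<le> 4 / cmod z"
proof -
  define r x y T where "r = cmod z" "x = Re z" "y = Im z" "T = tangent_at_i z"
  have T: "Re T = (r\<^sup>2 - 1) / (2 * y)" "Im T = x / y"
    by (simp_all add: r_x_y_T_def tangent_at_i_def)
  have "6 * r \<le> r * r"
    using assms(2) by (intro mult_right_mono) (auto simp: r_x_y_T_def)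
  moreover have "\<bar>x\<bar> \<le> r"
    using abs_Re_le_cmod by (simp add: r_x_y_T_def)
  ultimately have x: "2 * \<bar>x\<bar> \<le> r\<^sup>2 - 1" "2 * r\<^sup>2 \<le> 4 * (r\<^sup>2 - 1)" "\<bar>x\<bar> * r \<le> r\<^sup>2"
    using assms(2) by (auto simp: r_x_y_T_def power2_eq_square intro: mult_right_mono)
  have y: "0 < y"
    using assms(1) by (simp add: r_x_y_T_def)
  have "0 < Re T"
    using x y by (simp add: T)
  then show "T \<noteq> 0"
    by auto
  show "\<bar>Im T\<bar> \<le> Re T"
    using x y by (simp add: T abs_divide field_simps)
  have "\<bar>Im (sgn T)\<bar> = \<bar>Im T\<bar> / cmod T"
    by (simp add: abs_divide)
  also have "\<dots> \<le> \<bar>Im T\<bar> / Re T"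
    using \<open>0 < Re T\<close> complex_Re_le_cmod[of T] by (intro divide_left_mono mult_pos_pos) auto
  also have "\<dots> = 2 * \<bar>x\<bar> / (r\<^sup>2 - 1)"
    using y \<open>0 < Re T\<close> by (simp add: T abs_divide)
  also have "\<dots> \<le> 4 / r"
  proof -
    have "0 < r" "0 < r\<^sup>2 - 1"
      using assms(2) x by (auto simp: r_x_y_T_def)
    then show ?thesis
      using x by (simp add: field_simps)
  qed
  finally show "\<bar>Im (sgn T)\<bar> \<le> 4 / cmod z"
    by (simp add: r_x_y_T_def)
qed

lemma card_far_le:
  fixes z :: "'a \<Rightarrow> complex"
  assumes "finite F" "6 \<le> \<rho>" "0 < \<alpha>"
    and far: "\<And>i. i \<in> F \<Longrightarrow> 1 \<le> Im (z i) \<and> \<rho> \<le> cmod (z i)"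
    and angle: "\<And>i j. i \<in> F \<Longrightarrow> j \<in> F \<Longrightarrow> i \<noteq> j \<Longrightarrow>
                  \<alpha> \<le> vec_angle (tangent_at_i (z i)) (tangent_at_i (z j))"
  shows "real (card F) \<le> 40 / (\<alpha> * \<rho>) + 1"
proof -
  define s where "s i = Im (sgn (tangent_at_i (z i)))" for i
  have s: "\<bar>s i\<bar> \<le> 4 / \<rho>" if "i \<in> F" for i
  proof -
    have "\<bar>s i\<bar> \<le> 4 / cmod (z i)"
      using tangent_at_i_far(3) far[OF that] assms(2) by (simp add: s_def)
    also have "\<dots> \<le> 4 / \<rho>"
      using far[OF that] assms(2) by (intro divide_left_mono mult_pos_pos) auto
    finally show ?thesis .
  qed
  have "real (card F) \<le> (4 / \<rho> - - (4 / \<rho>)) / (\<alpha> / 5) + 1"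
  proof (rule card_le_of_separated[where f = s])
    fix i j assume ij: "i \<in> F" "j \<in> F" "i \<noteq> j"
    have "\<alpha> \<le> vec_angle (tangent_at_i (z i)) (tangent_at_i (z j))"
      by (rule angle[OF ij])
    also have "\<dots> \<le> 5 * \<bar>s i - s j\<bar>"
      unfolding s_def using far[OF ij(1)] far[OF ij(2)] assms(2)
      by (intro vec_angle_le_Im_sgn_diff tangent_at_i_far) auto
    finally show "\<alpha> / 5 \<le> \<bar>s i - s j\<bar>"
      by simp
  next
    show "- (4 / \<rho>) \<le> s i \<and> s i \<le> 4 / \<rho>" if "i \<in> F" for i
      using s[OF that] by linarith
  qed (use assms in auto)
  then show ?thesis
    by (simp add: field_simps)
qed

lemma card_separated_points_le:
  fixes z :: "'a \<Rightarrow> complex"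
  assumes "finite I" "0 < \<kappa>" "6 \<le> \<rho>" "0 < \<alpha>"
    and above: "\<And>i. i \<in> I \<Longrightarrow> 1 \<le> Im (z i)"
    and sep: "\<And>i j. i \<in> I \<Longrightarrow> j \<in> I \<Longrightarrow> i \<noteq> j \<Longrightarrow>
                2 * \<kappa> * Im (z i) * Im (z j) \<le> (cmod (z i - z j))\<^sup>2"
    and angle: "\<And>i j. i \<in> I \<Longrightarrow> j \<in> I \<Longrightarrow> i \<noteq> j \<Longrightarrow>
                  6 \<le> cmod (z i) \<Longrightarrow> 6 \<le> cmod (z j) \<Longrightarrow>
                  \<alpha> \<le> vec_angle (tangent_at_i (z i)) (tangent_at_i (z j))"
  shows "real (card I) \<le> near_const \<kappa> * \<rho> + 40 / (\<alpha> * \<rho>) + 2"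
proof -
  define N F where "N = {i \<in> I. cmod (z i) < \<rho>}" and "F = {i \<in> I. \<rho> \<le> cmod (z i)}"
  have "I = N \<union> F" "N \<inter> F = {}"
    by (auto simp: N_def F_def)
  then have "card I = card N + card F"
    using \<open>finite I\<close> by (simp add: card_Un_disjoint)
  moreover have "real (card N) \<le> near_const \<kappa> * \<rho> + 1"
    using assms(1-3) above sep by (intro card_near_le) (auto simp: N_def)
  moreover have "real (card F) \<le> 40 / (\<alpha> * \<rho>) + 1"
    using assms(1,3,4) above angle by (intro card_far_le) (auto simp: F_def)
  ultimately show ?thesis
    by simp
qed

section \<open>Drawings of the complete graph\<close>

lemma vv_res_Kn_le_hdist:
  assumes "i < n" "j < n" "i \<noteq> j"
  shows "vv_res_Kn n P \<le> hdist (P i) (P j)"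
proof -
  have "{hdist (P i) (P j) | i j. i < n \<and> j < n \<and> i \<noteq> j}
          \<subseteq> (\<lambda>(i, j). hdist (P i) (P j)) ` ({..<n} \<times> {..<n})"
    by auto
  then have "finite {hdist (P i) (P j) | i j. i < n \<and> j < n \<and> i \<noteq> j}"
    by (rule finite_subset) simp
  then show ?thesis
    unfolding vv_res_Kn_def using assms by (intro Min_le) auto
qed

lemma ang_res_Kn_le_hangle:
  assumes "v < n" "u < n" "w < n" "u \<noteq> v" "w \<noteq> v" "u \<noteq> w"
  shows "ang_res_Kn n P \<le> hangle (P v) (P u) (P w)"
proof -
  define S where "S = {hangle (P v) (P u) (P w) | v u w.
                         v < n \<and> u < n \<and> w < n \<and> u \<noteq> v \<and> w \<noteq> v \<and> u \<noteq> w}"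
  have "S \<subseteq> (\<lambda>(v, u, w). hangle (P v) (P u) (P w)) ` ({..<n} \<times> {..<n} \<times> {..<n})"
    by (force simp: S_def)
  then have "finite S"
    by (rule finite_subset) simp
  moreover have "hangle (P v) (P u) (P w) \<in> S"
    using assms by (auto simp: S_def)
  ultimately show ?thesis
    unfolding ang_res_Kn_def S_def[symmetric] by (auto intro: Min_le)
qed

lemma ang_res_Kn_le_2pi:
  assumes "hdrawing n P"
  shows "ang_res_Kn n P \<le> 2 * pi"
proof (cases "\<exists>v u w. v < n \<and> u < n \<and> w < n \<and> u \<noteq> v \<and> w \<noteq> v \<and> u \<noteq> w")
  case True
  then obtain v u w where vuw: "v < n" "u < n" "w < n" "u \<noteq> v" "w \<noteq> v" "u \<noteq> w"
    by blast
  have "ang_res_Kn n P \<le> hangle (P v) (P u) (P w)"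
    using ang_res_Kn_le_hangle[OF vuw] .
  also have "\<dots> \<le> pi"
    using assms vuw by (simp add: hdrawing_def hangle_eq_vec_angle vec_angle_le_pi)
  finally show ?thesis
    using pi_gt_zero by linarith
next
  case False
  then show ?thesis
    by (auto simp: ang_res_Kn_def)
qed

lemma exists_lowest_vertex:
  assumes "hdrawing n P" "0 < n"
  obtains i0 where "i0 < n" "\<And>i. i < n \<Longrightarrow> 1 \<le> Im (chart_at (P i0) (P i))"
proof -
  obtain i0 where "i0 < n" and lowest: "\<And>i. i < n \<Longrightarrow> Im (uhp (P i0)) \<le> Im (uhp (P i))"
    using ex_is_arg_min_if_finite[of "{..<n}" "\<lambda>i. Im (uhp (P i))"] assms(2)
    by (auto simp: is_arg_min_linorder)
  moreover have "1 \<le> Im (chart_at (P i0) (P i))" if "i < n" for i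
    using lowest[OF that] Im_uhp_pos assms(1) \<open>i0 < n\<close> by (simp add: hdrawing_def Im_chart_at)
  ultimately show ?thesis
    using that by blast
qed

lemma cosh_gt_1: "0 < c \<Longrightarrow> 1 < cosh (c::real)"
  using cosh_real_strict_mono[of 0 c] by simp

lemma drawing_separation:
  assumes "hdrawing n P" "0 < c" "c \<le> vv_res_Kn n P" "v \<in> hyp_plane" "i < n" "j < n" "i \<noteq> j"
  shows "2 * (cosh c - 1) * Im (chart_at v (P i)) * Im (chart_at v (P j))
           \<le> (cmod (chart_at v (P i) - chart_at v (P j)))\<^sup>2"
proof -
  have P: "P i \<in> hyp_plane" "P j \<in> hyp_plane"
    using assms(1,5,6) by (auto simp: hdrawing_def)
  have "c \<le> hdist (P i) (P j)"
    using vv_res_Kn_le_hdist[OF assms(5-7), of P] assms(3) by linarith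
  then have "cosh c \<le> - mink (P i) (P j)"
    using cosh_le_neg_mink[OF P] assms(2) by simp
  then show ?thesis
    using P assms(4) neg_mink_eq_cosh_chart_at[OF assms(4) P]
    by (intro separation_of_uhp_cosh_dist_ge) (simp_all add: Im_chart_at Im_uhp_pos)
qed

lemma drawing_size_le:
  assumes "0 < c" "0 < n" "hdrawing n P" "c \<le> vv_res_Kn n P"
    and "6 \<le> \<rho>" "0 < \<alpha>" "\<alpha> \<le> ang_res_Kn n P"
  shows "real n \<le> near_const (cosh c - 1) * \<rho> + 40 / (\<alpha> * \<rho>) + 2"
proof -
  obtain i0 where "i0 < n" and lowest: "\<And>i. i < n \<Longrightarrow> 1 \<le> Im (chart_at (P i0) (P i))"
    using exists_lowest_vertex assms(2,3) by blast
  have v: "P i0 \<in> hyp_plane" and P: "\<And>i. i < n \<Longrightarrow> P i \<in> hyp_plane"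
    using assms(3) \<open>i0 < n\<close> by (auto simp: hdrawing_def)
  define z where "z i = chart_at (P i0) (P i)" for i
  have "real (card {..<n}) \<le> near_const (cosh c - 1) * \<rho> + 40 / (\<alpha> * \<rho>) + 2"
  proof (rule card_separated_points_le[where z = z])
    show "0 < cosh c - 1"
      using cosh_gt_1[OF assms(1)] by simp
    show "1 \<le> Im (z i)" if "i \<in> {..<n}" for i
      using lowest that by (simp add: z_def)
    show "2 * (cosh c - 1) * Im (z i) * Im (z j) \<le> (cmod (z i - z j))\<^sup>2"
      if "i \<in> {..<n}" "j \<in> {..<n}" "i \<noteq> j" for i j
      using drawing_separation[OF assms(3,1,4) v] that by (simp add: z_def)
    show "\<alpha> \<le> vec_angle (tangent_at_i (z i)) (tangent_at_i (z j))"
      if "i \<in> {..<n}" "j \<in> {..<n}" "i \<noteq> j" "6 \<le> cmod (z i)" "6 \<le> cmod (z j)" for i j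
    proof -
      have "i \<noteq> i0" "j \<noteq> i0"
        using that(4,5) chart_at_self[OF v] by (auto simp: z_def)
      then have "ang_res_Kn n P \<le> hangle (P i0) (P i) (P j)"
        using that \<open>i0 < n\<close> by (intro ang_res_Kn_le_hangle) auto
      also have "\<dots> = vec_angle (tangent_at_i (z i)) (tangent_at_i (z j))"
        using that v P by (simp add: z_def hangle_eq_vec_angle)
      finally show ?thesis
        using assms(7) by simp
    qed
  qed (use assms in auto)
  then show ?thesis
    by simp
qed

definition ang_res_const :: "real \<Rightarrow> real" where
  "ang_res_const c =
     640 * near_const (cosh c - 1) + 2 * pi * (24 * near_const (cosh c - 1) + 5)\<^sup>2"

lemma ang_res_const_pos: "0 < c \<Longrightarrow> 0 < ang_res_const c"
  unfolding ang_res_const_def using near_const_pos[of "cosh c - 1"] cosh_gt_1[of c]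
  by (intro add_pos_nonneg) auto

lemma card_gt_of_ang_res_Kn_gt:
  assumes "hdrawing n P" "0 < n" "0 \<le> N" "2 * pi * N\<^sup>2 \<le> A"
    and "A / (real n)\<^sup>2 < ang_res_Kn n P"
  shows "N < real n"
proof (rule ccontr)
  assume "\<not> ?thesis"
  then have "2 * pi * (real n)\<^sup>2 \<le> 2 * pi * N\<^sup>2"
    by (intro mult_left_mono power_mono) auto
  also have "\<dots> \<le> A"
    by (rule assms(4))
  finally have "2 * pi \<le> A / (real n)\<^sup>2"
    using assms(2) by (simp add: field_simps)
  with assms(5) ang_res_Kn_le_2pi[OF assms(1)] show False
    by linarith
qed

lemma ang_res_Kn_le_const:
  assumes "0 < c" "2 \<le> n" "hdrawing n P" "c \<le> vv_res_Kn n P"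
  shows "ang_res_Kn n P \<le> ang_res_const c / (real n)\<^sup>2"
proof (rule ccontr)
  define C where "C = near_const (cosh c - 1)"
  define A where "A = ang_res_const c"
  have C: "0 < C"
    using near_const_pos cosh_gt_1[OF assms(1)] by (simp add: C_def)
  have A: "A = 640 * C + 2 * pi * (24 * C + 5)\<^sup>2" "0 < A"
    using ang_res_const_pos[OF assms(1)] by (simp_all add: A_def C_def ang_res_const_def)
  assume "\<not> ?thesis"
  then have big: "A / (real n)\<^sup>2 < ang_res_Kn n P"
    by (simp add: A_def)
  have n: "24 * C + 5 < real n"
    using A C assms(2) by (intro card_gt_of_ang_res_Kn_gt[OF assms(3) _ _ _ big]) simp_all
  then have \<rho>: "6 \<le> n / (4 * C)"
    using C by (simp add: field_simps)
  have \<alpha>: "0 < A / (real n)\<^sup>2" "A / (real n)\<^sup>2 \<le> ang_res_Kn n P"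
    using A assms(2) big by simp_all
  have "real n \<le> C * (n / (4 * C)) + 40 / (A / (real n)\<^sup>2 * (n / (4 * C))) + 2"
    using drawing_size_le[OF assms(1) _ assms(3,4) \<rho> \<alpha>] assms(2) by (simp add: C_def)
  also have "\<dots> = n / 4 + 160 * C * n / A + 2"
    using C assms(2) by (simp add: field_simps power2_eq_square)
  also have "\<dots> \<le> n / 4 + n / 4 + 2"
    using A mult_right_mono[of "640 * C" A "real n"] by (simp add: field_simps)
  finally show False
    using n C by linarith
qed

theorem theorem6:
  fixes c :: real
  assumes "c > 0"
  shows "\<exists>A>0. \<forall>n\<ge>2. \<forall>P. hdrawing n P \<and> vv_res_Kn n P \<ge> c
            \<longrightarrow> ang_res_Kn n P \<le> A / (real n)^2"
  using ang_res_const_pos[OF assms] ang_res_Kn_le_const[OF assms] by blast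

end
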